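(* Let $v>3$ and let $(X,\mathcal{B})$ be an STS$(v)$ with $X=\{1,\dots,v\}$. Then there is a sequencing $\pi=[x_1\,x_2\,\cdots\,x_v]$ of $X$ that is $3$-good for $(X,\mathcal{B})$, i.e. $\{x_i,x_{i+1},x_{i+2}\}\notin\mathcal{B}$ for all $1\le i\le v-2$.
   Context: A Steiner triple system of order $v$, STS$(v)$, is a pair $(X,\mathcal{B})$ where $X$ is a set of $v$ points and $\mathcal{B}$ is a set of 3-subsets of $X$ (blocks) such that every pair of distinct points lies in exactly one block. A sequencing of $X$ is an ordering $[x_1\,x_2\,\cdots\,x_v]$ of all points of $X$, each appearing exactly once. It is $3$-good if no three consecutive points form a block. *)

theory Defs
  imports Main
begin

definition is_STS :: "'a set \<Rightarrow> 'a set set \<Rightarrow> bool" where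
  "is_STS X B \<longleftrightarrow> finite X \<and>
     (\<forall>b\<in>B. b \<subseteq> X \<and> card b = 3) \<and>
     (\<forall>x\<in>X. \<forall>y\<in>X. x \<noteq> y \<longrightarrow> (\<exists>!b. b \<in> B \<and> x \<in> b \<and> y \<in> b))"

definition is_sequencing :: "'a set \<Rightarrow> 'a list \<Rightarrow> bool" where
  "is_sequencing X xs \<longleftrightarrow> distinct xs \<and> set xs = X"

text \<open>0-indexed: xs!i, xs!(i+1), xs!(i+2) for i+2 < length xs.\<close>
definition three_good :: "'a set set \<Rightarrow> 'a list \<Rightarrow> bool" where
  "three_good B xs \<longleftrightarrow>
     (\<forall>i. i + 2 < length xs \<longrightarrow> {xs ! i, xs ! (i+1), xs ! (i+2)} \<notin> B)"

end

theory Submission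
  imports Defs
begin

text \<open>The sequence is built from right to left. Prepending a point \<open>x\<close> to a 3-good
  sequence \<open>a # b # _\<close> only creates the new triple \<open>{x, a, b}\<close>, and since the pair
  \<open>{a, b}\<close> lies in at most one block, at most one unused point is forbidden. So a point
  can always be prepended while at least two remain, and only the last three or four
  points need care: with four left, also avoid leaving a block as the final triple
  (at most one point does so); with two left, order them so that neither closes a block.\<close>

definition is_packing :: "'a set set \<Rightarrow> bool" where
  "is_packing B \<longleftrightarrow>
     (\<forall>S\<in>B. \<forall>T\<in>B. \<forall>p q. p \<noteq> q \<longrightarrow> p \<in> S \<longrightarrow> q \<in> S \<longrightarrow> p \<in> T \<longrightarrow> q \<in> T \<longrightarrow> S = T)"

lemma is_packingD:
  assumes "is_packing B" "S \<in> B" "T \<in> B" "p \<noteq> q" "p \<in> S" "q \<in> S" "p \<in> T" "q \<in> T"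
  shows "S = T"
  using assms unfolding is_packing_def by blast

lemma is_STS_imp_is_packing:
  assumes "is_STS X B"
  shows "is_packing B"
  unfolding is_packing_def
proof (intro ballI allI impI)
  fix S T p q
  assume "S \<in> B" "T \<in> B" "p \<noteq> q" "p \<in> S" "q \<in> S" "p \<in> T" "q \<in> T"
  moreover from assms \<open>S \<in> B\<close> have "S \<subseteq> X" unfolding is_STS_def by blast
  ultimately show "S = T" using assms unfolding is_STS_def by blast
qed

definition closes_block :: "'a set set \<Rightarrow> 'a \<Rightarrow> 'a list \<Rightarrow> bool" where
  "closes_block B x ys \<longleftrightarrow> (case ys of a # b # _ \<Rightarrow> {x, a, b} \<in> B | _ \<Rightarrow> False)"

lemma closes_block_swap:
  "closes_block B x (y # ys) \<longleftrightarrow> closes_block B y (x # ys)"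
  by (cases ys) (simp_all add: closes_block_def insert_commute)

lemma three_good_Cons:
  "three_good B (x # ys) \<longleftrightarrow> \<not> closes_block B x ys \<and> three_good B ys"
proof (cases ys rule: remdups_adj.cases) \<comment> \<open>cases \<open>[]\<close>, \<open>[a]\<close>, \<open>a # b # r\<close>\<close>
  case (3 a b r)
  have split_first: "(\<forall>i. P i) \<longleftrightarrow> P 0 \<and> (\<forall>i. P (Suc i))" for P :: "nat \<Rightarrow> bool"
    by (metis not0_implies_Suc)
  show ?thesis
    unfolding 3 three_good_def closes_block_def by (subst split_first) simp
qed (auto simp: three_good_def closes_block_def)

lemma closes_block_unique:
  assumes "is_packing B" "distinct ys" "x \<notin> set ys" "y \<notin> set ys"
    and "closes_block B x ys" "closes_block B y ys"
  shows "x = y"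
proof -
  obtain a b r where ys: "ys = a # b # r"
    using assms(5) unfolding closes_block_def by (auto split: list.splits)
  with assms(5,6) have "{x, a, b} \<in> B" "{y, a, b} \<in> B"
    unfolding closes_block_def by auto
  moreover have "a \<noteq> b" using assms(2) ys by auto
  ultimately have "{x, a, b} = {y, a, b}" using is_packingD[OF assms(1)] by blast
  thus ?thesis using assms(3,4) ys by auto
qed

lemma remove_one_block_unique:
  assumes "is_packing B" "finite R" "card R = 4" "x \<in> R" "y \<in> R"
    and "R - {x} \<in> B" "R - {y} \<in> B"
  shows "x = y"
proof (rule ccontr)
  assume "x \<noteq> y"
  with assms have "card (R - {x, y}) = 2" by (simp add: card_Diff_subset)
  then obtain p q where "R - {x, y} = {p, q}" "p \<noteq> q" by (meson card_2_iff)
  hence "R - {x} = R - {y}"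
    using is_packingD[OF assms(1,6,7), of p q] by blast
  thus False using \<open>x \<noteq> y\<close> assms(4) by blast
qed

lemma exists_avoiding_two_unique:
  assumes "finite R" "3 \<le> card R"
    and "\<forall>x\<in>R. \<forall>y\<in>R. P x \<longrightarrow> P y \<longrightarrow> x = y"
    and "\<forall>x\<in>R. \<forall>y\<in>R. Q x \<longrightarrow> Q y \<longrightarrow> x = y"
  shows "\<exists>x\<in>R. \<not> P x \<and> \<not> Q x"
proof (rule ccontr)
  let ?P = "{x\<in>R. P x}" and ?Q = "{x\<in>R. Q x}"
  assume "\<not> ?thesis"
  hence "R = ?P \<union> ?Q" by blast
  hence "card R \<le> card ?P + card ?Q" by (metis card_Un_le)
  moreover have "card ?P \<le> 1" "card ?Q \<le> 1"
    using assms(1,3,4) by (simp_all add: card_le_Suc0_iff_eq)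
  ultimately show False using assms(2) by linarith
qed

definition can_prefix :: "'a set set \<Rightarrow> 'a set \<Rightarrow> 'a list \<Rightarrow> bool" where
  "can_prefix B R ys \<longleftrightarrow> (\<exists>zs. distinct zs \<and> set zs = R \<and> three_good B (zs @ ys))"

lemma can_prefix_insert:
  assumes "x \<notin> R" "can_prefix B R (x # ys)"
  shows "can_prefix B (insert x R) ys"
proof -
  obtain zs where "distinct zs" "set zs = R" "three_good B (zs @ x # ys)"
    using assms(2) unfolding can_prefix_def by blast
  with assms(1) show ?thesis
    unfolding can_prefix_def by (intro exI[of _ "zs @ [x]"]) auto
qed

lemma can_prefix_pair:
  assumes "is_packing B" "distinct ys" "three_good B ys"
    and "c \<noteq> d" "c \<notin> set ys" "d \<notin> set ys" "\<not> closes_block B c (d # ys)"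
  shows "can_prefix B {c, d} ys"
proof (cases "closes_block B d ys")
  case True
  with closes_block_unique[OF assms(1,2,5,6)] assms(4)
  have "\<not> closes_block B c ys" by blast
  with assms(3,7) have "three_good B ([d, c] @ ys)"
    by (simp add: three_good_Cons closes_block_swap)
  with assms(4) show ?thesis
    unfolding can_prefix_def by (intro exI[of _ "[d, c]"]) auto
next
  case False
  with assms(3,7) have "three_good B ([c, d] @ ys)" by (simp add: three_good_Cons)
  with assms(4) show ?thesis
    unfolding can_prefix_def by (intro exI[of _ "[c, d]"]) auto
qed

lemma can_prefix_card_ge_3:
  assumes "is_packing B" "finite R" "3 \<le> card R" "card R = 3 \<longrightarrow> R \<notin> B"
    and "R \<inter> set ys = {}" "distinct ys" "three_good B ys"
  shows "can_prefix B R ys"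
  using assms(2-)
proof (induction "card R" arbitrary: R ys rule: less_induct)
  case less
  have "\<exists>x\<in>R. \<not> closes_block B x ys \<and> \<not> (card R = 4 \<and> R - {x} \<in> B)"
  proof (rule exists_avoiding_two_unique[OF less.prems(1,2)])
    show "\<forall>x\<in>R. \<forall>y\<in>R. closes_block B x ys \<longrightarrow> closes_block B y ys \<longrightarrow> x = y"
      using closes_block_unique[OF assms(1) less.prems(5)] less.prems(4) by blast
    show "\<forall>x\<in>R. \<forall>y\<in>R. card R = 4 \<and> R - {x} \<in> B \<longrightarrow> card R = 4 \<and> R - {y} \<in> B \<longrightarrow> x = y"
      using remove_one_block_unique[OF assms(1) less.prems(1)] by blast
  qed
  then obtain x where x: "x \<in> R" "\<not> closes_block B x ys" "card R = 4 \<longrightarrow> R - {x} \<notin> B"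
    by blast
  have ys': "(R - {x}) \<inter> set (x # ys) = {}" "distinct (x # ys)" "three_good B (x # ys)"
    using less.prems(4-6) x(1,2) by (auto simp: three_good_Cons)
  have "can_prefix B (R - {x}) (x # ys)"
  proof (cases "card R = 3")
    case True
    with less.prems(1) x(1) have "card (R - {x}) = 2" by simp
    then obtain c d where cd: "R - {x} = {c, d}" "c \<noteq> d" by (meson card_2_iff)
    have "{c, d, x} = R" using cd x(1) by blast
    with True less.prems(3) have "\<not> closes_block B c (d # x # ys)"
      by (simp add: closes_block_def)
    moreover have "c \<notin> set (x # ys)" "d \<notin> set (x # ys)" using cd ys'(1) by auto
    ultimately show ?thesis
      using can_prefix_pair[OF assms(1) ys'(2,3) cd(2)] cd(1) by simp
  next
    case False
    show ?thesis
    proof (rule less.hyps)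
      show "card (R - {x}) < card R" using less.prems(1) x(1) by (rule card_Diff1_less)
      show "finite (R - {x})" using less.prems(1) by simp
      show "3 \<le> card (R - {x})" "card (R - {x}) = 3 \<longrightarrow> R - {x} \<notin> B"
        using less.prems(1,2) x(1,3) False by auto
    qed (fact ys')+
  qed
  with x(1) show ?case using can_prefix_insert[of x "R - {x}"] by (simp add: insert_absorb)
qed

theorem theorem1:
  fixes v :: nat and B :: "nat set set"
  assumes "v > 3"
    and "is_STS {1..v} B"
  shows "\<exists>xs. is_sequencing {1..v} xs \<and> three_good B xs"
proof -
  have "can_prefix B {1..v} []"
    using can_prefix_card_ge_3[OF is_STS_imp_is_packing[OF assms(2)]] assms(1)
    by (simp add: three_good_def)
  thus ?thesis unfolding can_prefix_def is_sequencing_def by auto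
qed

end
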